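(* Let $\mathfrak g=\mathfrak g_{-1}\oplus\mathfrak g_0\oplus\mathfrak g_1$ be a complex Lie superalgebra with $\dim\mathfrak g_{\bar1}<\infty$ and compatible $\mathbb Z$-grading, and let $V$ be a simple $\mathfrak g_0$-supermodule. Then every non-zero $\mathfrak g$-submodule of $K(V)$ contains $\Lambda^{\max}(\mathfrak g_{-1})\otimes V$; in particular $\mathrm{Soc}(K(V))=U(\mathfrak g)\cdot(\Lambda^{\max}(\mathfrak g_{-1})\otimes V)$, and this socle is simple. Similarly, $K'(V)$ has simple socle. In particular, both $K(V)$ and $K'(V)$ are indecomposable.
   Context: Compatible grading: $\mathfrak g_0=\mathfrak g_{\bar0}$, $\mathfrak g_{\bar1}=\mathfrak g_{-1}\oplus\mathfrak g_1$, $\mathfrak g_{\pm1}$ $\mathfrak g_0$-submodules, $[\mathfrak g_{\pm1},\mathfrak g_{\pm1}]=0$. Supermodule homomorphisms are even. $K(V)=U(\mathfrak g)\otimes_{U(\mathfrak g_0\oplus\mathfrak g_1)}V$ with $\mathfrak g_1V=0$, identified as a vector space with $\Lambda(\mathfrak g_{-1})\otimes V$; $K'(V)=U(\mathfrak g)\otimes_{U(\mathfrak g_0\oplus\mathfrak g_{-1})}V$ with $\mathfrak g_{-1}V=0$. $\Lambda^{\max}$ is the top exterior power. *)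

theory Defs
  imports Complex_Main
begin

text \<open>Complex vector spaces are types of class ab_group_add together with an explicit
  scalar multiplication by complex numbers satisfying the vector space axioms.
  Parities are encoded by bool: False = even (0-bar), True = odd (1-bar).\<close>

definition sign_par :: "bool \<Rightarrow> bool \<Rightarrow> 'a::ab_group_add \<Rightarrow> 'a" where
  "sign_par d e x = (if d \<and> e then - x else x)"   \<comment> \<open>(-1)^(|x||y|) times x\<close>

definition sum_set :: "'a::ab_group_add set \<Rightarrow> 'a set \<Rightarrow> 'a set" where
  "sum_set A B = {a + b | a b. a \<in> A \<and> b \<in> B}"

text \<open>Homogeneous part of parity d of g = g_-1 + g_0 + g_1 (g_0bar = g_0, g_1bar = g_-1 + g_1).\<close>
definition gpar :: "'g::ab_group_add set \<Rightarrow> 'g set \<Rightarrow> 'g set \<Rightarrow> bool \<Rightarrow> 'g set" where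
  "gpar gm g0 gp d = (if d then sum_set gm gp else g0)"

definition graded_lie_superalgebra ::
  "(complex \<Rightarrow> 'g::ab_group_add \<Rightarrow> 'g) \<Rightarrow> ('g \<Rightarrow> 'g \<Rightarrow> 'g) \<Rightarrow> 'g set \<Rightarrow> 'g set \<Rightarrow> 'g set \<Rightarrow> bool" where
  "graded_lie_superalgebra sg br gm g0 gp \<longleftrightarrow>
     vector_space sg \<and>
     module.subspace sg gm \<and> module.subspace sg g0 \<and> module.subspace sg gp \<and>
     (\<forall>x. \<exists>!t. fst t \<in> gm \<and> fst (snd t) \<in> g0 \<and> snd (snd t) \<in> gp \<and>
            x = fst t + fst (snd t) + snd (snd t)) \<and>
     (\<forall>x y z. br (x + y) z = br x z + br y z) \<and>
     (\<forall>x y z. br x (y + z) = br x y + br x z) \<and>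
     (\<forall>c x y. br (sg c x) y = sg c (br x y)) \<and>
     (\<forall>c x y. br x (sg c y) = sg c (br x y)) \<and>
     (\<forall>d e. \<forall>x \<in> gpar gm g0 gp d. \<forall>y \<in> gpar gm g0 gp e.
        br x y = - sign_par d e (br y x)) \<and>
     (\<forall>d e f. \<forall>x \<in> gpar gm g0 gp d. \<forall>y \<in> gpar gm g0 gp e. \<forall>z \<in> gpar gm g0 gp f.
        br x (br y z) = br (br x y) z + sign_par d e (br y (br x z))) \<and>
     (\<forall>x \<in> g0. \<forall>y \<in> g0. br x y \<in> g0) \<and>
     (\<forall>x \<in> g0. \<forall>y \<in> gm. br x y \<in> gm) \<and>
     (\<forall>x \<in> g0. \<forall>y \<in> gp. br x y \<in> gp) \<and>
     (\<forall>x \<in> gm. \<forall>y \<in> gp. br x y \<in> g0) \<and>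
     (\<forall>x \<in> gm. \<forall>y \<in> gm. br x y = 0) \<and>
     (\<forall>x \<in> gp. \<forall>y \<in> gp. br x y = 0)"

definition finite_dim :: "(complex \<Rightarrow> 'a::ab_group_add \<Rightarrow> 'a) \<Rightarrow> 'a set \<Rightarrow> bool" where
  "finite_dim s S \<longleftrightarrow> (\<exists>B. finite B \<and> B \<subseteq> S \<and> module.span s B = S)"

definition mpar :: "'m set \<Rightarrow> 'm set \<Rightarrow> bool \<Rightarrow> 'm set" where
  "mpar M0 M1 d = (if d then M1 else M0)"

text \<open>A supermodule (on the whole type 'm, with grading M0 + M1) over the Lie sub-superalgebra
  of g with even part Ev and odd part Od.\<close>
definition supermodule ::
  "(complex \<Rightarrow> 'g::ab_group_add \<Rightarrow> 'g) \<Rightarrow> ('g \<Rightarrow> 'g \<Rightarrow> 'g) \<Rightarrow> 'g set \<Rightarrow> 'g set \<Rightarrow>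
   (complex \<Rightarrow> 'm::ab_group_add \<Rightarrow> 'm) \<Rightarrow> 'm set \<Rightarrow> 'm set \<Rightarrow> ('g \<Rightarrow> 'm \<Rightarrow> 'm) \<Rightarrow> bool" where
  "supermodule sg br Ev Od sm M0 M1 act \<longleftrightarrow>
     vector_space sm \<and> module.subspace sm M0 \<and> module.subspace sm M1 \<and>
     M0 \<inter> M1 = {0} \<and> sum_set M0 M1 = UNIV \<and>
     (\<forall>x \<in> sum_set Ev Od. \<forall>y \<in> sum_set Ev Od. \<forall>m. act (x + y) m = act x m + act y m) \<and>
     (\<forall>x \<in> sum_set Ev Od. \<forall>c m. act (sg c x) m = sm c (act x m)) \<and>
     (\<forall>x \<in> sum_set Ev Od. \<forall>m n. act x (m + n) = act x m + act x n) \<and>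
     (\<forall>x \<in> sum_set Ev Od. \<forall>c m. act x (sm c m) = sm c (act x m)) \<and>
     (\<forall>d e. \<forall>x \<in> (if d then Od else Ev). act x ` mpar M0 M1 e \<subseteq> mpar M0 M1 (d \<noteq> e)) \<and>
     (\<forall>d e. \<forall>x \<in> (if d then Od else Ev). \<forall>y \<in> (if e then Od else Ev). \<forall>m.
        act (br x y) m = act x (act y m) - sign_par d e (act y (act x m)))"

definition sub_supermodule ::
  "'g::ab_group_add set \<Rightarrow> (complex \<Rightarrow> 'm::ab_group_add \<Rightarrow> 'm) \<Rightarrow> 'm set \<Rightarrow> 'm set \<Rightarrow>
   ('g \<Rightarrow> 'm \<Rightarrow> 'm) \<Rightarrow> 'm set \<Rightarrow> bool" where
  "sub_supermodule L sm M0 M1 act N \<longleftrightarrow>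
     module.subspace sm N \<and> (\<forall>x \<in> L. act x ` N \<subseteq> N) \<and> N = sum_set (N \<inter> M0) (N \<inter> M1)"

definition simple_sub ::
  "'g::ab_group_add set \<Rightarrow> (complex \<Rightarrow> 'm::ab_group_add \<Rightarrow> 'm) \<Rightarrow> 'm set \<Rightarrow> 'm set \<Rightarrow>
   ('g \<Rightarrow> 'm \<Rightarrow> 'm) \<Rightarrow> 'm set \<Rightarrow> bool" where
  "simple_sub L sm M0 M1 act N \<longleftrightarrow>
     sub_supermodule L sm M0 M1 act N \<and> N \<noteq> {0} \<and>
     (\<forall>N'. sub_supermodule L sm M0 M1 act N' \<and> N' \<subseteq> N \<longrightarrow> N' = {0} \<or> N' = N)"

definition simple_supermodule ::
  "(complex \<Rightarrow> 'g::ab_group_add \<Rightarrow> 'g) \<Rightarrow> ('g \<Rightarrow> 'g \<Rightarrow> 'g) \<Rightarrow> 'g set \<Rightarrow> 'g set \<Rightarrow>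
   (complex \<Rightarrow> 'm::ab_group_add \<Rightarrow> 'm) \<Rightarrow> 'm set \<Rightarrow> 'm set \<Rightarrow> ('g \<Rightarrow> 'm \<Rightarrow> 'm) \<Rightarrow> bool" where
  "simple_supermodule sg br Ev Od sm M0 M1 act \<longleftrightarrow>
     supermodule sg br Ev Od sm M0 M1 act \<and> simple_sub (sum_set Ev Od) sm M0 M1 act UNIV"

definition socle ::
  "'g::ab_group_add set \<Rightarrow> (complex \<Rightarrow> 'm::ab_group_add \<Rightarrow> 'm) \<Rightarrow> 'm set \<Rightarrow> 'm set \<Rightarrow>
   ('g \<Rightarrow> 'm \<Rightarrow> 'm) \<Rightarrow> 'm set" where
  "socle L sm M0 M1 act = module.span sm (\<Union>{N. simple_sub L sm M0 M1 act N})"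

text \<open>U(g) . X: the smallest sub-supermodule containing X.\<close>
definition generated_sub ::
  "'g::ab_group_add set \<Rightarrow> (complex \<Rightarrow> 'm::ab_group_add \<Rightarrow> 'm) \<Rightarrow> 'm set \<Rightarrow> 'm set \<Rightarrow>
   ('g \<Rightarrow> 'm \<Rightarrow> 'm) \<Rightarrow> 'm set \<Rightarrow> 'm set" where
  "generated_sub L sm M0 M1 act X = \<Inter>{N. sub_supermodule L sm M0 M1 act N \<and> X \<subseteq> N}"

definition indecomposable ::
  "'g::ab_group_add set \<Rightarrow> (complex \<Rightarrow> 'm::ab_group_add \<Rightarrow> 'm) \<Rightarrow> 'm set \<Rightarrow> 'm set \<Rightarrow>
   ('g \<Rightarrow> 'm \<Rightarrow> 'm) \<Rightarrow> bool" where
  "indecomposable L sm M0 M1 act \<longleftrightarrow>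
     (UNIV :: 'm set) \<noteq> {0} \<and>
     \<not> (\<exists>N1 N2. sub_supermodule L sm M0 M1 act N1 \<and> sub_supermodule L sm M0 M1 act N2 \<and>
          N1 \<noteq> {0} \<and> N2 \<noteq> {0} \<and> N1 \<inter> N2 = {0} \<and> sum_set N1 N2 = UNIV)"

text \<open>Ordered product y_S . w = y_{i1} (y_{i2} ( ... (y_{ik} w))) for S = {i1 < ... < ik}.\<close>
definition yprod :: "('g \<Rightarrow> 'm \<Rightarrow> 'm) \<Rightarrow> 'g list \<Rightarrow> nat set \<Rightarrow> 'm \<Rightarrow> 'm" where
  "yprod act ys S w = foldr (\<lambda>i. act (ys ! i)) (sorted_list_of_set S) w"

text \<open>The induced module U(g) \<otimes>_{U(g_0 + Ann)} V, where Ann V = 0, given (via PBW) as a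
  g-supermodule M with an even g_0-embedding iota of V such that M is free over
  Lambda(Cre) on iota(V), i.e. M = Lambda(Cre) \<otimes> V as a vector space.
  For K(V): Ann = g_1, Cre = g_-1; for K'(V): Ann = g_-1, Cre = g_1.\<close>
definition induced_module ::
  "(complex \<Rightarrow> 'g::ab_group_add \<Rightarrow> 'g) \<Rightarrow> ('g \<Rightarrow> 'g \<Rightarrow> 'g) \<Rightarrow> 'g set \<Rightarrow> 'g set \<Rightarrow> 'g set \<Rightarrow>
   (complex \<Rightarrow> 'v::ab_group_add \<Rightarrow> 'v) \<Rightarrow> 'v set \<Rightarrow> 'v set \<Rightarrow> ('g \<Rightarrow> 'v \<Rightarrow> 'v) \<Rightarrow>
   (complex \<Rightarrow> 'm::ab_group_add \<Rightarrow> 'm) \<Rightarrow> 'm set \<Rightarrow> 'm set \<Rightarrow> ('g \<Rightarrow> 'm \<Rightarrow> 'm) \<Rightarrow>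
   ('v \<Rightarrow> 'm) \<Rightarrow> bool" where
  "induced_module sg br Cre g0 Ann sv V0 V1 rho sm M0 M1 act iota \<longleftrightarrow>
     supermodule sg br g0 (sum_set Cre Ann) sm M0 M1 act \<and>
     Vector_Spaces.linear sv sm iota \<and>
     iota ` V0 \<subseteq> M0 \<and> iota ` V1 \<subseteq> M1 \<and>
     (\<forall>x \<in> g0. \<forall>v. act x (iota v) = iota (rho x v)) \<and>
     (\<forall>x \<in> Ann. \<forall>v. act x (iota v) = 0) \<and>
     (\<exists>ys. distinct ys \<and> module.independent sg (set ys) \<and> module.span sg (set ys) = Cre \<and>
        (\<forall>m. \<exists>!f :: nat set \<Rightarrow> 'v.
           (\<forall>S. S \<notin> Pow {..<length ys} \<longrightarrow> f S = 0) \<and>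
           m = (\<Sum>S \<in> Pow {..<length ys}. yprod act ys S (iota (f S)))))"

text \<open>Lambda^max(Cre) \<otimes> V inside the induced module: span of all y_1 ... y_n . iota(v)
  with y_i \<in> Cre and n = dim Cre.\<close>
definition top_part ::
  "(complex \<Rightarrow> 'g::ab_group_add \<Rightarrow> 'g) \<Rightarrow> 'g set \<Rightarrow> (complex \<Rightarrow> 'm::ab_group_add \<Rightarrow> 'm) \<Rightarrow>
   ('g \<Rightarrow> 'm \<Rightarrow> 'm) \<Rightarrow> ('v \<Rightarrow> 'm) \<Rightarrow> 'm set" where
  "top_part sg Cre sm act iota =
     module.span sm {foldr act ys (iota v) | ys v.
        length ys = vector_space.dim sg Cre \<and> set ys \<subseteq> Cre}"

end

theory Submission
  imports Defs
begin

text \<open>Identify K(V) with \<Lambda>(g_-1) \<otimes> V through a basis y_1, ..., y_n of g_-1. The y_i act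
  as anticommuting operators of square zero, so any product of n elements of g_-1 applied to w is a
  multiple of y_1 ... y_n w, and g_0 commutes with y_1 ... y_n up to such a multiple. Given a nonzero
  element of a submodule N, apply to it the y_i missing from a component y_S v of minimal degree:
  this kills all other components and leaves \<plusminus>y_1 ... y_n v. The vectors v with y_1 ... y_n v \<in> N
  then form a nonzero g_0-submodule of V, hence all of V, so N contains \<Lambda>^max(g_-1) \<otimes> V.
  A nonzero subspace lying in every nonzero submodule generates the unique simple submodule, which
  is then the socle, and rules out nontrivial decompositions. For K'(V) exchange g_-1 and g_1.\<close>

lemma sum_setI: "a \<in> A \<Longrightarrow> b \<in> B \<Longrightarrow> a + b \<in> sum_set A B"
  unfolding sum_set_def by blast

definition eq_up_to_sign :: "'a::group_add \<Rightarrow> 'a \<Rightarrow> bool" where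
  "eq_up_to_sign a b \<longleftrightarrow> a = b \<or> a = - b"

lemma eq_up_to_sign_refl: "eq_up_to_sign a a"
  by (simp add: eq_up_to_sign_def)

lemma eq_up_to_sign_uminus: "eq_up_to_sign a b \<Longrightarrow> eq_up_to_sign (- a) b"
  by (auto simp: eq_up_to_sign_def)

lemma eq_up_to_sign_trans: "eq_up_to_sign a b \<Longrightarrow> eq_up_to_sign b c \<Longrightarrow> eq_up_to_sign a c"
  by (auto simp: eq_up_to_sign_def)

lemma eq_up_to_sign_zero: "eq_up_to_sign a 0 \<Longrightarrow> a = 0"
  by (auto simp: eq_up_to_sign_def)

subsection \<open>Sub-supermodules, generated submodules and the socle\<close>

lemma supermodule_parts_unique:
  assumes SM: "supermodule sg br Ev Od sm M0 M1 act"
    and "a0 \<in> M0" "b0 \<in> M0" "a1 \<in> M1" "b1 \<in> M1" and sum: "a0 + a1 = b0 + b1"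
  shows "a0 = b0 \<and> a1 = b1"
proof -
  interpret vector_space sm using SM by (simp add: supermodule_def)
  have "a0 - b0 = b1 - a1" using sum by (simp add: algebra_simps)
  moreover have "a0 - b0 \<in> M0" "b1 - a1 \<in> M1"
    using SM assms(2-5) by (auto simp: supermodule_def intro: subspace_diff)
  moreover have "M0 \<inter> M1 = {0}" using SM by (simp add: supermodule_def)
  ultimately have "a0 = b0" by (metis IntI right_minus_eq singletonD)
  then show ?thesis using sum by simp
qed

lemma sub_supermodule_parts:
  assumes SM: "supermodule sg br Ev Od sm M0 M1 act"
    and N: "sub_supermodule L sm M0 M1 act N"
    and "m \<in> N" "a0 \<in> M0" "a1 \<in> M1" "m = a0 + a1"
  shows "a0 \<in> N \<and> a1 \<in> N"
proof -
  have "m \<in> sum_set (N \<inter> M0) (N \<inter> M1)" using N \<open>m \<in> N\<close> by (simp add: sub_supermodule_def)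
  then obtain b0 b1 where "b0 \<in> N \<inter> M0" "b1 \<in> N \<inter> M1" "m = b0 + b1"
    unfolding sum_set_def by blast
  then show ?thesis using supermodule_parts_unique[OF SM, of a0 b0 a1 b1] assms(4-6) by auto
qed

lemma sub_supermodule_Inter:
  assumes SM: "supermodule sg br Ev Od sm M0 M1 act"
    and F: "\<And>N. N \<in> F \<Longrightarrow> sub_supermodule L sm M0 M1 act N"
  shows "sub_supermodule L sm M0 M1 act (\<Inter>F)"
proof -
  interpret vector_space sm using SM by (simp add: supermodule_def)
  have sub: "subspace (\<Inter>F)" using F by (auto simp: sub_supermodule_def intro: subspace_Inter)
  have "\<Inter>F \<subseteq> sum_set (\<Inter>F \<inter> M0) (\<Inter>F \<inter> M1)"
  proof
    fix m assume m: "m \<in> \<Inter>F"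
    have "m \<in> sum_set M0 M1" using SM by (simp add: supermodule_def)
    then obtain a0 a1 where a: "a0 \<in> M0" "a1 \<in> M1" "m = a0 + a1" unfolding sum_set_def by blast
    then have "a0 \<in> \<Inter>F \<and> a1 \<in> \<Inter>F" using sub_supermodule_parts[OF SM F] m by blast
    then show "m \<in> sum_set (\<Inter>F \<inter> M0) (\<Inter>F \<inter> M1)" using a by (auto intro: sum_setI)
  qed
  moreover have "sum_set (\<Inter>F \<inter> M0) (\<Inter>F \<inter> M1) \<subseteq> \<Inter>F"
    using subspace_add[OF sub] unfolding sum_set_def by auto
  moreover have "\<forall>x \<in> L. act x ` \<Inter>F \<subseteq> \<Inter>F" using F by (fastforce simp: sub_supermodule_def)
  ultimately show ?thesis using sub by (auto simp: sub_supermodule_def)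
qed

lemma sub_supermodule_generated_sub:
  "supermodule sg br Ev Od sm M0 M1 act \<Longrightarrow>
     sub_supermodule L sm M0 M1 act (generated_sub L sm M0 M1 act X)"
  unfolding generated_sub_def by (rule sub_supermodule_Inter) auto

lemma generated_sub_minimal:
  "sub_supermodule L sm M0 M1 act N \<Longrightarrow> X \<subseteq> N \<Longrightarrow> generated_sub L sm M0 M1 act X \<subseteq> N"
  unfolding generated_sub_def by blast

lemma subset_generated_sub: "X \<subseteq> generated_sub L sm M0 M1 act X"
  unfolding generated_sub_def by blast

lemma simple_sub_generated_sub_if_in_every_sub:
  assumes SM: "supermodule sg br Ev Od sm M0 M1 act" and T: "\<exists>t\<in>T. t \<noteq> 0"
    and every: "\<forall>N. sub_supermodule L sm M0 M1 act N \<and> N \<noteq> {0} \<longrightarrow> T \<subseteq> N"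
  shows "simple_sub L sm M0 M1 act (generated_sub L sm M0 M1 act T)"
  using sub_supermodule_generated_sub[OF SM] subset_generated_sub[of T] T
    generated_sub_minimal every
  unfolding simple_sub_def by blast

lemma socle_eq_generated_sub_if_in_every_sub:
  assumes SM: "supermodule sg br Ev Od sm M0 M1 act" and T: "\<exists>t\<in>T. t \<noteq> 0"
    and every: "\<forall>N. sub_supermodule L sm M0 M1 act N \<and> N \<noteq> {0} \<longrightarrow> T \<subseteq> N"
  shows "socle L sm M0 M1 act = generated_sub L sm M0 M1 act T"
proof -
  interpret vector_space sm using SM by (simp add: supermodule_def)
  let ?G = "generated_sub L sm M0 M1 act T"
  have G: "simple_sub L sm M0 M1 act ?G"
    by (rule simple_sub_generated_sub_if_in_every_sub[OF SM T every])
  have "N = ?G" if "simple_sub L sm M0 M1 act N" for N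
    using that G generated_sub_minimal[of L sm M0 M1 act N T] every
    unfolding simple_sub_def by blast
  with G have "{N. simple_sub L sm M0 M1 act N} = {?G}" by blast
  moreover have "subspace ?G" using G by (simp add: simple_sub_def sub_supermodule_def)
  ultimately show ?thesis by (simp add: socle_def)
qed

lemma simple_sub_socle_if_in_every_sub:
  assumes "supermodule sg br Ev Od sm M0 M1 act" "\<exists>t\<in>T. t \<noteq> 0"
    and "\<forall>N. sub_supermodule L sm M0 M1 act N \<and> N \<noteq> {0} \<longrightarrow> T \<subseteq> N"
  shows "simple_sub L sm M0 M1 act (socle L sm M0 M1 act)"
  using simple_sub_generated_sub_if_in_every_sub[OF assms]
    socle_eq_generated_sub_if_in_every_sub[OF assms] by simp

lemma indecomposable_if_in_every_sub:
  assumes T: "\<exists>t\<in>T. t \<noteq> 0"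
    and every: "\<forall>N. sub_supermodule L sm M0 M1 act N \<and> N \<noteq> {0} \<longrightarrow> T \<subseteq> N"
  shows "indecomposable L sm M0 M1 act"
  unfolding indecomposable_def using T every by blast

subsection \<open>Induced modules with a chosen basis of the creation part\<close>

locale induced_with_basis =
  VM: vector_space sm + VG: vector_space sg + VV: vector_space sv
  for sm :: "complex \<Rightarrow> 'm::ab_group_add \<Rightarrow> 'm"
  and sg :: "complex \<Rightarrow> 'g::ab_group_add \<Rightarrow> 'g"
  and sv :: "complex \<Rightarrow> 'v::ab_group_add \<Rightarrow> 'v" +
  fixes br :: "'g \<Rightarrow> 'g \<Rightarrow> 'g" and Cre g0 Ann :: "'g set"
    and V0 V1 :: "'v set" and rho :: "'g \<Rightarrow> 'v \<Rightarrow> 'v"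
    and M0 M1 :: "'m set" and act :: "'g \<Rightarrow> 'm \<Rightarrow> 'm" and iota :: "'v \<Rightarrow> 'm"
    and ys :: "'g list"
  assumes M_supermodule: "supermodule sg br g0 (sum_set Cre Ann) sm M0 M1 act"
    and iota_linear: "Vector_Spaces.linear sv sm iota"
    and iota_even: "iota ` V0 \<subseteq> M0" and iota_odd: "iota ` V1 \<subseteq> M1"
    and act_g0_iota: "\<forall>x \<in> g0. \<forall>v. act x (iota v) = iota (rho x v)"
    and ys_distinct: "distinct ys" and ys_independent: "VG.independent (set ys)"
    and ys_span: "VG.span (set ys) = Cre"
    and unique_expansion: "\<forall>m. \<exists>!f :: nat set \<Rightarrow> 'v.
           (\<forall>S. S \<notin> Pow {..<length ys} \<longrightarrow> f S = 0) \<and>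
           m = (\<Sum>S \<in> Pow {..<length ys}. yprod act ys S (iota (f S)))"
    and V_simple: "simple_supermodule sg br g0 {0} sv V0 V1 rho"
    and zero_g0: "0 \<in> g0" and zero_Ann: "0 \<in> Ann"
    and br_Cre_Cre: "\<forall>x\<in>Cre. \<forall>y\<in>Cre. br x y = 0"
    and br_g0_Cre: "\<forall>x\<in>g0. \<forall>y\<in>Cre. br x y \<in> Cre"
begin

sublocale iota: Vector_Spaces.linear sv sm iota by (rule iota_linear)

abbreviation "g_full \<equiv> sum_set g0 (sum_set Cre Ann)"
abbreviation "n \<equiv> length ys"
abbreviation "Y S w \<equiv> yprod act ys S w"
abbreviation "ylist l w \<equiv> foldr (\<lambda>i. act (ys ! i)) l w"
abbreviation "ytop w \<equiv> foldr act ys w"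

lemma Cre_subspace: "VG.subspace Cre"
  using ys_span VG.subspace_span by blast

lemma zero_Cre: "0 \<in> Cre"
  using Cre_subspace VG.subspace_0 by blast

lemma Cre_odd: "x \<in> Cre \<Longrightarrow> x \<in> sum_set Cre Ann"
  using sum_setI[OF _ zero_Ann, of x] by simp

lemma Cre_in_g_full: "x \<in> Cre \<Longrightarrow> x \<in> g_full"
  using sum_setI[OF zero_g0 Cre_odd, of x] by simp

lemma ys_in_Cre: "set ys \<subseteq> Cre"
  using VG.span_superset ys_span by blast

lemma nth_ys_in_Cre: "j < n \<Longrightarrow> ys ! j \<in> Cre"
  using ys_in_Cre by auto

lemma dim_Cre: "VG.dim Cre = n"
  using VG.dim_span_eq_card_independent[OF ys_independent] ys_span distinct_card[OF ys_distinct]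
  by simp

lemma act_add: "x \<in> g_full \<Longrightarrow> act x (a + b) = act x a + act x b"
  using M_supermodule by (simp add: supermodule_def)

lemma act_scale: "x \<in> g_full \<Longrightarrow> act x (sm c a) = sm c (act x a)"
  using M_supermodule by (simp add: supermodule_def)

lemma act_add_left: "x \<in> g_full \<Longrightarrow> y \<in> g_full \<Longrightarrow> act (x + y) a = act x a + act y a"
  using M_supermodule by (simp add: supermodule_def)

lemma act_scale_left: "x \<in> g_full \<Longrightarrow> act (sg c x) a = sm c (act x a)"
  using M_supermodule by (simp add: supermodule_def)

lemma act_zero: "x \<in> g_full \<Longrightarrow> act x 0 = 0"
  using act_add[of x 0 0] by simp

lemma act_uminus: "x \<in> g_full \<Longrightarrow> act x (- a) = - act x a"
  using act_add[of x a "- a"] act_zero[of x] by (simp add: minus_unique)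

lemma act_sum: "x \<in> g_full \<Longrightarrow> act x (sum f A) = (\<Sum>a\<in>A. act x (f a))"
  by (induct A rule: infinite_finite_induct) (simp_all add: act_zero act_add)

lemma act_zero_left: "act 0 a = 0"
  using act_add_left[of 0 0 a] Cre_in_g_full[OF zero_Cre] by simp

lemma act_bracket:
  "\<forall>d e. \<forall>x \<in> (if d then sum_set Cre Ann else g0). \<forall>y \<in> (if e then sum_set Cre Ann else g0). \<forall>m.
     act (br x y) m = act x (act y m) - sign_par d e (act y (act x m))"
  using M_supermodule unfolding supermodule_def by (elim conjE) assumption

lemma act_parity:
  "\<forall>d e. \<forall>x \<in> (if d then sum_set Cre Ann else g0). act x ` mpar M0 M1 e \<subseteq> mpar M0 M1 (d \<noteq> e)"
  using M_supermodule unfolding supermodule_def by (elim conjE) assumption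

lemma act_Cre_anticommute:
  assumes "x \<in> Cre" "y \<in> Cre" shows "act x (act y m) = - act y (act x m)"
  using act_bracket[rule_format, where d=True and e=True, of x y m] assms Cre_odd br_Cre_Cre act_zero_left
  by (simp add: sign_par_def eq_neg_iff_add_eq_0)

lemma act_Cre_twice:
  assumes x: "x \<in> Cre" shows "act x (act x m) = 0"
proof -
  let ?a = "act x (act x m)"
  have "sm (1/2 + 1/2) ?a = sm (1/2) ?a + sm (1/2) ?a" by (simp only: VM.scale_left_distrib)
  also have "\<dots> = sm (1/2) (?a + ?a)" by (simp only: VM.scale_right_distrib)
  also have "?a + ?a = 0" using act_Cre_anticommute[OF x x, of m] by (metis add.right_inverse)
  finally show ?thesis by simp
qed

lemma act_g0_Cre:
  assumes "x \<in> g0" "z \<in> Cre" shows "act x (act z m) = act z (act x m) + act (br x z) m"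
  using act_bracket[rule_format, where d=False and e=True, of x z m] assms Cre_odd by (simp add: sign_par_def)

lemma act_Cre_parity:
  assumes z: "z \<in> Cre" and a: "a \<in> mpar M0 M1 e" shows "act z a \<in> mpar M0 M1 (\<not> e)"
proof -
  have "act z ` mpar M0 M1 e \<subseteq> mpar M0 M1 (True \<noteq> e)"
    using act_parity[rule_format, where d=True and e=e, of z] Cre_odd[OF z] by simp
  then show ?thesis using a by auto
qed

lemma foldr_act_add: "set zs \<subseteq> Cre \<Longrightarrow> foldr act zs (a + b) = foldr act zs a + foldr act zs b"
  by (induction zs) (auto simp: act_add Cre_in_g_full)

lemma foldr_act_scale: "set zs \<subseteq> Cre \<Longrightarrow> foldr act zs (sm c a) = sm c (foldr act zs a)"
  by (induction zs) (auto simp: act_scale Cre_in_g_full)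

lemma foldr_act_zero: "set zs \<subseteq> Cre \<Longrightarrow> foldr act zs 0 = 0"
  by (induction zs) (auto simp: act_zero Cre_in_g_full)

lemma foldr_act_parity:
  "set zs \<subseteq> Cre \<Longrightarrow> a \<in> mpar M0 M1 e \<Longrightarrow> foldr act zs a \<in> mpar M0 M1 (e \<noteq> odd (length zs))"
  by (induction zs) (auto dest: act_Cre_parity)

lemma ylist_zero: "set l \<subseteq> {..<n} \<Longrightarrow> ylist l 0 = 0"
  by (induction l) (auto simp: act_zero Cre_in_g_full nth_ys_in_Cre)

lemma ylist_sum: "set l \<subseteq> {..<n} \<Longrightarrow> ylist l (sum f A) = (\<Sum>a\<in>A. ylist l (f a))"
  by (induction l) (auto simp: act_sum Cre_in_g_full nth_ys_in_Cre)

lemma Y_zero: "S \<subseteq> {..<n} \<Longrightarrow> Y S 0 = 0"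
  using ylist_zero[of "sorted_list_of_set S"] finite_subset[of S "{..<n}"] by (simp add: yprod_def)

lemma Y_full: "Y {..<n} w = ytop w"
proof -
  have "sorted_list_of_set {..<n} = [0..<n]" by (simp add: lessThan_atLeast0)
  then have "Y {..<n} w = foldr act (map ((!) ys) [0..<n]) w" by (simp add: yprod_def foldr_map o_def)
  then show ?thesis by (simp add: map_nth)
qed

lemma eq_up_to_sign_act: "x \<in> g_full \<Longrightarrow> eq_up_to_sign a b \<Longrightarrow> eq_up_to_sign (act x a) (act x b)"
  by (auto simp: eq_up_to_sign_def act_uminus)

lemma act_ys_ylist:
  assumes "sorted l" "distinct l" "set l \<subseteq> {..<n}" "j < n"
  shows "(j \<in> set l \<longrightarrow> act (ys ! j) (ylist l w) = 0) \<and>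
    (j \<notin> set l \<longrightarrow> eq_up_to_sign (act (ys ! j) (ylist l w)) (ylist (insort j l) w))"
  using assms
proof (induction l)
  case Nil
  then show ?case by (simp add: eq_up_to_sign_refl)
next
  case (Cons a l)
  have a: "a < n" and j: "j < n" and l: "sorted l" "distinct l" "set l \<subseteq> {..<n}"
    using Cons.prems by auto
  have a_less: "\<forall>x\<in>set l. a < x" using Cons.prems by (auto simp: order_less_le)
  note IH = Cons.IH[OF l j]
  consider "j = a" | "j < a" | "a < j" by linarith
  then show ?case
  proof cases
    case 1
    then show ?thesis using act_Cre_twice[OF nth_ys_in_Cre[OF a]] by simp
  next
    case 2
    then show ?thesis using a_less by (auto simp: eq_up_to_sign_refl)
  next
    case 3
    have swap: "act (ys ! j) (ylist (a # l) w) = - act (ys ! a) (act (ys ! j) (ylist l w))"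
      using act_Cre_anticommute[OF nth_ys_in_Cre[OF j] nth_ys_in_Cre[OF a]] by simp
    show ?thesis
    proof (cases "j \<in> set l")
      case True
      then show ?thesis using IH swap act_zero[OF Cre_in_g_full[OF nth_ys_in_Cre[OF a]]] by simp
    next
      case False
      then have "eq_up_to_sign (act (ys ! a) (act (ys ! j) (ylist l w))) (act (ys ! a) (ylist (insort j l) w))"
        using IH eq_up_to_sign_act[OF Cre_in_g_full[OF nth_ys_in_Cre[OF a]]] by blast
      then show ?thesis using False 3 swap eq_up_to_sign_uminus by auto
    qed
  qed
qed

lemma act_ys_Y:
  assumes S: "S \<subseteq> {..<n}" and j: "j < n"
  shows "(j \<in> S \<longrightarrow> act (ys ! j) (Y S w) = 0) \<and>
    (j \<notin> S \<longrightarrow> eq_up_to_sign (act (ys ! j) (Y S w)) (Y (insert j S) w))"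
proof -
  have "finite S" using S finite_subset by blast
  then show ?thesis
    using act_ys_ylist[of "sorted_list_of_set S" j w] S j
    by (simp add: yprod_def sorted_list_of_set_insert)
qed

lemma ylist_Y:
  assumes "distinct l" "set l \<subseteq> {..<n}" "S \<subseteq> {..<n}"
  shows "(set l \<inter> S \<noteq> {} \<longrightarrow> ylist l (Y S w) = 0) \<and>
    (set l \<inter> S = {} \<longrightarrow> eq_up_to_sign (ylist l (Y S w)) (Y (set l \<union> S) w))"
  using assms
proof (induction l)
  case Nil
  then show ?case by (simp add: eq_up_to_sign_refl)
next
  case (Cons a l)
  have a: "a < n" and a_notin: "a \<notin> set l" and lS: "set l \<union> S \<subseteq> {..<n}"
    using Cons.prems by auto
  have a_in_g_full: "ys ! a \<in> g_full" using Cre_in_g_full[OF nth_ys_in_Cre[OF a]] .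
  note IH = Cons.IH[OF _ _ Cons.prems(3)]
  show ?case
  proof (cases "set l \<inter> S = {}")
    case False
    then show ?thesis using IH Cons.prems act_zero[OF a_in_g_full] by auto
  next
    case True
    have lifted: "eq_up_to_sign (act (ys ! a) (ylist l (Y S w))) (act (ys ! a) (Y (set l \<union> S) w))"
      using eq_up_to_sign_act[OF a_in_g_full] IH Cons.prems True by auto
    note step = act_ys_Y[OF lS a, of w]
    show ?thesis
    proof (cases "a \<in> S")
      case True
      then show ?thesis using lifted step eq_up_to_sign_zero by auto
    next
      case False
      then show ?thesis using lifted step a_notin True eq_up_to_sign_trans by auto
    qed
  qed
qed

lemma act_mem_span:
  assumes z: "z \<in> g_full" and P: "\<And>p. p \<in> P \<Longrightarrow> act z p \<in> VM.span Q" and X: "X \<in> VM.span P"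
  shows "act z X \<in> VM.span Q"
proof -
  have "VM.subspace {X. act z X \<in> VM.span Q}"
    by (rule VM.subspaceI) (auto simp: act_zero[OF z] act_add[OF z] act_scale[OF z]
        VM.span_zero VM.span_add VM.span_scale)
  then show ?thesis using VM.span_induct[OF X] P by blast
qed

lemma act_Cre_mem_span:
  assumes basis: "\<And>y. y \<in> set ys \<Longrightarrow> act y m \<in> VM.span Q" and z: "z \<in> Cre"
  shows "act z m \<in> VM.span Q"
proof -
  let ?Z = "{z. z \<in> Cre \<and> act z m \<in> VM.span Q}"
  have "VG.subspace ?Z"
  proof (rule VG.subspaceI)
    show "0 \<in> ?Z" using zero_Cre act_zero_left VM.span_zero by simp
  next
    fix x y assume "x \<in> ?Z" "y \<in> ?Z"
    then show "x + y \<in> ?Z"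
      using VG.subspace_add[OF Cre_subspace] act_add_left[OF Cre_in_g_full Cre_in_g_full] VM.span_add
      by auto
  next
    fix c x assume "x \<in> ?Z"
    then show "sg c x \<in> ?Z"
      using VG.subspace_scale[OF Cre_subspace] act_scale_left[OF Cre_in_g_full] VM.span_scale by auto
  qed
  moreover have "set ys \<subseteq> ?Z" using basis ys_in_Cre by auto
  ultimately have "VG.span (set ys) \<subseteq> ?Z" using VG.span_minimal by blast
  then show ?thesis using z ys_span by auto
qed

definition monomials :: "nat \<Rightarrow> 'm \<Rightarrow> 'm set" where
  "monomials k w = {Y S w | S. S \<subseteq> {..<n} \<and> card S = k}"

lemma act_Cre_monomials:
  assumes z: "z \<in> Cre" and X: "X \<in> VM.span (monomials k w)"
  shows "act z X \<in> VM.span (monomials (Suc k) w)"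
proof (rule act_mem_span[OF Cre_in_g_full[OF z] _ X])
  fix p assume "p \<in> monomials k w"
  then obtain S where p: "p = Y S w" and S: "S \<subseteq> {..<n}" "card S = k"
    unfolding monomials_def by blast
  show "act z p \<in> VM.span (monomials (Suc k) w)"
  proof (rule act_Cre_mem_span[OF _ z])
    fix y assume "y \<in> set ys"
    then obtain j where j: "j < n" "y = ys ! j" by (metis in_set_conv_nth)
    note step = act_ys_Y[OF S(1) j(1), of w]
    show "act y p \<in> VM.span (monomials (Suc k) w)"
    proof (cases "j \<in> S")
      case True
      then show ?thesis using step j p VM.span_zero by simp
    next
      case False
      have "finite S" using S finite_subset by blast
      then have "Y (insert j S) w \<in> monomials (Suc k) w"
        unfolding monomials_def using S False j by auto
      then show ?thesis
        using VM.span_base step False j p VM.span_neg unfolding eq_up_to_sign_def by fastforce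
    qed
  qed
qed

lemma foldr_Cre_monomials:
  "set zs \<subseteq> Cre \<Longrightarrow> X \<in> VM.span (monomials k w) \<Longrightarrow>
     foldr act zs X \<in> VM.span (monomials (k + length zs) w)"
  by (induction zs) (auto intro: act_Cre_monomials)

lemma mem_span_monomials_0: "w \<in> VM.span (monomials 0 w)"
proof -
  have "Y {} w \<in> monomials 0 w" unfolding monomials_def by auto
  then show ?thesis by (auto simp: yprod_def dest: VM.span_base)
qed

lemma monomials_top: "monomials n w = {ytop w}"
proof -
  have "S = {..<n}" if "S \<subseteq> {..<n}" "card S = n" for S :: "nat set"
    using that by (metis card_lessThan card_subset_eq finite_lessThan)
  then show ?thesis unfolding monomials_def using Y_full by (auto intro!: exI[of _ "{..<n}"])
qed

lemma foldr_Cre_top: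
  "set zs \<subseteq> Cre \<Longrightarrow> length zs = n \<Longrightarrow> \<exists>c. foldr act zs w = sm c (ytop w)"
  using foldr_Cre_monomials[OF _ mem_span_monomials_0, of zs w] monomials_top VM.span_singleton
  by auto

lemma act_g0_foldr_Cre:
  "x \<in> g0 \<Longrightarrow> set zs \<subseteq> Cre \<Longrightarrow>
     act x (foldr act zs w) - foldr act zs (act x w) \<in> VM.span (monomials (length zs) w)"
proof (induction zs)
  case Nil
  then show ?case using VM.span_zero by simp
next
  case (Cons z zs)
  have x: "x \<in> g0" and z: "z \<in> Cre" and zs: "set zs \<subseteq> Cre" using Cons.prems by auto
  define s where "s = act x (foldr act zs w) - foldr act zs (act x w)"
  have s: "s \<in> VM.span (monomials (length zs) w)" using Cons.IH[OF x zs] s_def by simp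
  have "act x (foldr act zs w) = foldr act zs (act x w) + s" by (simp add: s_def)
  then have "act x (foldr act (z # zs) w) - foldr act (z # zs) (act x w)
      = act z s + foldr act (br x z # zs) w"
    using act_g0_Cre[OF x z] act_add[OF Cre_in_g_full[OF z]] by (simp add: algebra_simps)
  moreover have "act z s \<in> VM.span (monomials (length (z # zs)) w)"
    using act_Cre_monomials[OF z s] by simp
  moreover have "foldr act (br x z # zs) w \<in> VM.span (monomials (length (z # zs)) w)"
    using foldr_Cre_monomials[OF _ mem_span_monomials_0, of "br x z # zs" w] br_g0_Cre x z zs
    by simp
  ultimately show ?case using VM.span_add by simp
qed

lemma act_g0_top: "x \<in> g0 \<Longrightarrow> \<exists>c. act x (ytop w) = ytop (act x w) + sm c (ytop w)"
  using act_g0_foldr_Cre[OF _ ys_in_Cre, of x w] monomials_top VM.span_singleton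
  by (auto simp: algebra_simps)

lemma expansion_unique:
  assumes "\<forall>S. S \<notin> Pow {..<n} \<longrightarrow> f S = 0" "\<forall>S. S \<notin> Pow {..<n} \<longrightarrow> g S = 0"
    and "(\<Sum>S \<in> Pow {..<n}. Y S (iota (f S))) = (\<Sum>S \<in> Pow {..<n}. Y S (iota (g S)))"
  shows "f = g"
proof -
  obtain h where "\<forall>h'. (\<forall>S. S \<notin> Pow {..<n} \<longrightarrow> h' S = 0) \<and>
      (\<Sum>S \<in> Pow {..<n}. Y S (iota (g S))) = (\<Sum>S \<in> Pow {..<n}. Y S (iota (h' S))) \<longrightarrow> h' = h"
    using spec[OF unique_expansion, of "\<Sum>S \<in> Pow {..<n}. Y S (iota (g S))"] by (elim ex1E) blast
  then show ?thesis using assms by metis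
qed

lemma ytop_iota_nonzero:
  assumes v: "v \<noteq> 0" shows "ytop (iota v) \<noteq> 0"
proof
  assume top_zero: "ytop (iota v) = 0"
  define f where "f = (\<lambda>S::nat set. if S = {..<n} then v else 0)"
  have "(\<Sum>S \<in> Pow {..<n}. Y S (iota (f S)))
      = (\<Sum>S \<in> Pow {..<n}. if S = {..<n} then Y {..<n} (iota v) else 0)"
    by (rule sum.cong) (auto simp: f_def Y_zero iota.zero)
  also have "\<dots> = 0" using top_zero by (simp only: Y_full sum.delta' finite_Pow_iff finite_lessThan) simp
  also have "\<dots> = (\<Sum>S \<in> Pow {..<n}. Y S (iota ((\<lambda>_. 0) S)))" by (simp add: Y_zero iota.zero)
  finally have "f = (\<lambda>_. 0)" by (rule expansion_unique[rotated 2]) (auto simp: f_def)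
  then show False using v by (metis f_def)
qed

lemma top_part_nonzero: "\<exists>t \<in> top_part sg Cre sm act iota. t \<noteq> 0"
proof -
  have "(UNIV :: 'v set) \<noteq> {0}" using V_simple by (simp add: simple_supermodule_def simple_sub_def)
  then obtain v :: 'v where "v \<noteq> 0" by blast
  moreover have "ytop (iota v) \<in> top_part sg Cre sm act iota"
    unfolding top_part_def using dim_Cre ys_in_Cre by (auto intro!: VM.span_base)
  ultimately show ?thesis using ytop_iota_nonzero by blast
qed

text \<open>Applying the creation operators missing from a component y_S of minimal cardinality kills
  every other component, and turns y_S into the top monomial.\<close>

lemma complement_isolates_minimal_term:
  assumes S0: "S0 \<subseteq> {..<n}"
    and minimal: "\<And>S. S \<subseteq> {..<n} \<Longrightarrow> f S \<noteq> 0 \<Longrightarrow> card S0 \<le> card S"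
  shows "eq_up_to_sign (ylist (sorted_list_of_set ({..<n} - S0)) (\<Sum>S \<in> Pow {..<n}. Y S (iota (f S))))
           (ytop (iota (f S0)))"
proof -
  define l where "l = sorted_list_of_set ({..<n} - S0)"
  have l: "distinct l" "set l \<subseteq> {..<n}" "set l = {..<n} - S0" unfolding l_def by auto
  have others: "ylist l (Y S (iota (f S))) = 0" if S: "S \<in> Pow {..<n} - {S0}" for S
  proof -
    have Sn: "S \<subseteq> {..<n}" using S by blast
    show ?thesis
    proof (cases "set l \<inter> S = {}")
      case False
      then show ?thesis using ylist_Y[OF l(1,2) Sn] by blast
    next
      case True
      then have "S \<subset> S0" using S l(3) by blast
      then have "card S < card S0" using psubset_card_mono[OF finite_subset[OF S0 finite_lessThan]] by blast
      then have "f S = 0" using minimal[OF Sn] by (meson leD)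
      then show ?thesis by (simp add: iota.zero Y_zero[OF Sn] ylist_zero[OF l(2)])
    qed
  qed
  have "ylist l (\<Sum>S \<in> Pow {..<n}. Y S (iota (f S))) = (\<Sum>S \<in> Pow {..<n}. ylist l (Y S (iota (f S))))"
    by (rule ylist_sum[OF l(2)])
  also have "\<dots> = ylist l (Y S0 (iota (f S0))) + (\<Sum>S \<in> Pow {..<n} - {S0}. ylist l (Y S (iota (f S))))"
    by (rule sum.remove) (use S0 in auto)
  also have "\<dots> = ylist l (Y S0 (iota (f S0)))" using others by simp
  finally have "ylist l (\<Sum>S \<in> Pow {..<n}. Y S (iota (f S))) = ylist l (Y S0 (iota (f S0)))" .
  moreover have "set l \<inter> S0 = {}" "set l \<union> S0 = {..<n}" using l(3) S0 by auto
  ultimately show ?thesis using ylist_Y[OF l(1,2) S0, of "iota (f S0)"] Y_full by (simp add: l_def)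
qed

lemma eq_up_to_sign_mem_subspace:
  "VM.subspace N \<Longrightarrow> eq_up_to_sign a b \<Longrightarrow> a \<in> N \<Longrightarrow> b \<in> N"
  unfolding eq_up_to_sign_def using VM.subspace_neg by fastforce

lemma sub_supermodule_contains_top:
  assumes N: "sub_supermodule UNIV sm M0 M1 act N" and nonzero: "N \<noteq> {0}"
  obtains v where "v \<noteq> 0" "ytop (iota v) \<in> N"
proof -
  have sub: "VM.subspace N" and closed: "\<And>x m. m \<in> N \<Longrightarrow> act x m \<in> N"
    using N by (auto simp: sub_supermodule_def)
  obtain m where m: "m \<in> N" "m \<noteq> 0" using nonzero VM.subspace_0[OF sub] by blast
  obtain f where m_eq: "m = (\<Sum>S \<in> Pow {..<n}. Y S (iota (f S)))"
    using ex1_implies_ex[OF spec[OF unique_expansion, of m]] by blast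
  have "\<exists>S. S \<subseteq> {..<n} \<and> f S \<noteq> 0"
  proof (rule ccontr)
    assume "\<nexists>S. S \<subseteq> {..<n} \<and> f S \<noteq> 0"
    then have "\<forall>S \<in> Pow {..<n}. Y S (iota (f S)) = 0" by (auto simp: iota.zero Y_zero)
    then have "m = 0" using m_eq by simp
    with m show False by simp
  qed
  then obtain S1 where S1: "S1 \<subseteq> {..<n} \<and> f S1 \<noteq> 0" by blast
  obtain S0 where S0: "S0 \<subseteq> {..<n} \<and> f S0 \<noteq> 0"
    and minimal: "\<forall>S. S \<subseteq> {..<n} \<and> f S \<noteq> 0 \<longrightarrow> card S0 \<le> card S"
    using ex_has_least_nat[of "\<lambda>S. S \<subseteq> {..<n} \<and> f S \<noteq> 0" S1 card] S1 by blast
  have "ylist l m \<in> N" for l by (induction l) (simp_all add: m(1) closed)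
  moreover have "eq_up_to_sign (ylist (sorted_list_of_set ({..<n} - S0)) m) (ytop (iota (f S0)))"
    unfolding m_eq by (rule complement_isolates_minimal_term) (use S0 minimal in auto)
  ultimately have "ytop (iota (f S0)) \<in> N" using eq_up_to_sign_mem_subspace[OF sub] by blast
  with S0 show ?thesis using that by blast
qed

definition top_preimage :: "'m set \<Rightarrow> 'v set" where
  "top_preimage N = {v. ytop (iota v) \<in> N}"

lemma ytop_iota_parity:
  "v \<in> V0 \<Longrightarrow> ytop (iota v) \<in> mpar M0 M1 (odd n)"
  "v \<in> V1 \<Longrightarrow> ytop (iota v) \<in> mpar M0 M1 (even n)"
  using foldr_act_parity[OF ys_in_Cre, of "iota v" False] foldr_act_parity[OF ys_in_Cre, of "iota v" True]
    iota_even iota_odd by (auto simp: mpar_def)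

lemma top_preimage_graded:
  assumes N: "sub_supermodule UNIV sm M0 M1 act N" and v: "v \<in> top_preimage N"
  shows "v \<in> sum_set (top_preimage N \<inter> V0) (top_preimage N \<inter> V1)"
proof -
  have "sum_set V0 V1 = UNIV"
    using V_simple by (simp add: simple_supermodule_def supermodule_def)
  then obtain v0 v1 where v01: "v0 \<in> V0" "v1 \<in> V1" "v = v0 + v1" unfolding sum_set_def by blast
  have N_top: "ytop (iota v) \<in> N" using v by (simp add: top_preimage_def)
  have split: "ytop (iota v) = ytop (iota v0) + ytop (iota v1)"
    using v01 by (simp add: iota.add foldr_act_add[OF ys_in_Cre])
  note parts = sub_supermodule_parts[OF M_supermodule N N_top]
  have "ytop (iota v0) \<in> N \<and> ytop (iota v1) \<in> N"
  proof (cases "even n")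
    case True
    then show ?thesis using parts[OF _ _ split] ytop_iota_parity v01 by (simp add: mpar_def)
  next
    case False
    then show ?thesis using parts[of "ytop (iota v1)" "ytop (iota v0)"] split ytop_iota_parity v01
      by (simp add: mpar_def add.commute)
  qed
  then show ?thesis using v01 by (auto simp: top_preimage_def intro: sum_setI)
qed

lemma top_preimage_sub_supermodule:
  assumes N: "sub_supermodule UNIV sm M0 M1 act N"
  shows "sub_supermodule (sum_set g0 {0}) sv V0 V1 rho (top_preimage N)"
proof -
  have sub: "VM.subspace N" and closed: "\<And>x m. m \<in> N \<Longrightarrow> act x m \<in> N"
    using N by (auto simp: sub_supermodule_def)
  have W_sub: "VV.subspace (top_preimage N)"
    by (rule VV.subspaceI) (auto simp: top_preimage_def iota.add iota.scale
        foldr_act_zero[OF ys_in_Cre] foldr_act_add[OF ys_in_Cre] foldr_act_scale[OF ys_in_Cre]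
        VM.subspace_0[OF sub] VM.subspace_add[OF sub] VM.subspace_scale[OF sub])
  have "rho x v \<in> top_preimage N" if x: "x \<in> sum_set g0 {0}" and v: "v \<in> top_preimage N" for x v
  proof -
    from x have x: "x \<in> g0" unfolding sum_set_def by auto
    obtain c where c: "act x (ytop (iota v)) = ytop (act x (iota v)) + sm c (ytop (iota v))"
      using act_g0_top[OF x] by blast
    have "ytop (iota (rho x v)) = act x (ytop (iota v)) - sm c (ytop (iota v))"
      using c act_g0_iota x by simp
    then show ?thesis using v closed VM.subspace_scale[OF sub] VM.subspace_diff[OF sub]
      by (simp add: top_preimage_def)
  qed
  moreover have "sum_set (top_preimage N \<inter> V0) (top_preimage N \<inter> V1) \<subseteq> top_preimage N"
    using VV.subspace_add[OF W_sub] unfolding sum_set_def by auto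
  ultimately show ?thesis using W_sub top_preimage_graded[OF N]
    unfolding sub_supermodule_def by blast
qed

theorem top_part_subset_sub_supermodule:
  assumes N: "sub_supermodule UNIV sm M0 M1 act N" and nonzero: "N \<noteq> {0}"
  shows "top_part sg Cre sm act iota \<subseteq> N"
proof -
  have sub: "VM.subspace N" using N by (simp add: sub_supermodule_def)
  obtain v where "v \<noteq> 0" "ytop (iota v) \<in> N" using sub_supermodule_contains_top[OF N nonzero] .
  then have "top_preimage N \<noteq> {0}" by (auto simp: top_preimage_def)
  then have all: "top_preimage N = UNIV"
    using top_preimage_sub_supermodule[OF N] V_simple
    unfolding simple_supermodule_def simple_sub_def by blast
  have "foldr act zs (iota u) \<in> N" if "length zs = n" "set zs \<subseteq> Cre" for zs u
  proof -
    obtain c where "foldr act zs (iota u) = sm c (ytop (iota u))"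
      using foldr_Cre_top[of zs "iota u"] \<open>length zs = n\<close> \<open>set zs \<subseteq> Cre\<close> by blast
    then show ?thesis using all VM.subspace_scale[OF sub] by (auto simp: top_preimage_def)
  qed
  then show ?thesis unfolding top_part_def dim_Cre by (intro VM.span_minimal[OF _ sub]) blast
qed

end

lemma induced_module_top_part_in_every_sub:
  assumes K: "induced_module sg br Cre g0 Ann sv V0 V1 rho sm M0 M1 act iota"
    and V: "simple_supermodule sg br g0 {0} sv V0 V1 rho"
    and VG: "vector_space sg" and g0: "module.subspace sg g0" and Ann: "module.subspace sg Ann"
    and br_Cre_Cre: "\<forall>x\<in>Cre. \<forall>y\<in>Cre. br x y = 0"
    and br_g0_Cre: "\<forall>x\<in>g0. \<forall>y\<in>Cre. br x y \<in> Cre"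
  shows "\<forall>N. sub_supermodule UNIV sm M0 M1 act N \<and> N \<noteq> {0} \<longrightarrow> top_part sg Cre sm act iota \<subseteq> N"
    and "\<exists>t \<in> top_part sg Cre sm act iota. t \<noteq> 0"
proof -
  interpret VG: vector_space sg by (rule VG)
  have zeros: "0 \<in> g0" "0 \<in> Ann" using VG.subspace_0 g0 Ann by blast+
  from K obtain ys where SM: "supermodule sg br g0 (sum_set Cre Ann) sm M0 M1 act"
    and "Vector_Spaces.linear sv sm iota" "iota ` V0 \<subseteq> M0" "iota ` V1 \<subseteq> M1"
    and "\<forall>x \<in> g0. \<forall>v. act x (iota v) = iota (rho x v)"
    and "distinct ys" "VG.independent (set ys)" "VG.span (set ys) = Cre"
    and "\<forall>m. \<exists>!f. (\<forall>S. S \<notin> Pow {..<length ys} \<longrightarrow> f S = 0) \<and>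
           m = (\<Sum>S \<in> Pow {..<length ys}. yprod act ys S (iota (f S)))"
    unfolding induced_module_def by (elim conjE exE) blast
  moreover have "vector_space sm" using SM by (simp add: supermodule_def)
  moreover have "vector_space sv" using V by (simp add: simple_supermodule_def supermodule_def)
  ultimately interpret induced_with_basis sm sg sv br Cre g0 Ann V0 V1 rho M0 M1 act iota ys
    using VG V zeros br_Cre_Cre br_g0_Cre
    by (intro induced_with_basis.intro induced_with_basis_axioms.intro)
  show "\<forall>N. sub_supermodule UNIV sm M0 M1 act N \<and> N \<noteq> {0} \<longrightarrow> top_part sg Cre sm act iota \<subseteq> N"
    using top_part_subset_sub_supermodule by blast
  show "\<exists>t \<in> top_part sg Cre sm act iota. t \<noteq> 0" by (rule top_part_nonzero)
qed

theorem lemma3p2: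
  fixes sg :: "complex \<Rightarrow> 'g::ab_group_add \<Rightarrow> 'g" and br :: "'g \<Rightarrow> 'g \<Rightarrow> 'g"
    and gm g0 gp :: "'g set"
    and sv :: "complex \<Rightarrow> 'v::ab_group_add \<Rightarrow> 'v" and V0 V1 :: "'v set"
    and rho :: "'g \<Rightarrow> 'v \<Rightarrow> 'v"
    and sm :: "complex \<Rightarrow> 'm::ab_group_add \<Rightarrow> 'm" and M0 M1 :: "'m set"
    and act :: "'g \<Rightarrow> 'm \<Rightarrow> 'm" and iota :: "'v \<Rightarrow> 'm"
    and sn :: "complex \<Rightarrow> 'n::ab_group_add \<Rightarrow> 'n" and N0 N1 :: "'n set"
    and act' :: "'g \<Rightarrow> 'n \<Rightarrow> 'n" and iota' :: "'v \<Rightarrow> 'n"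
  assumes g: "graded_lie_superalgebra sg br gm g0 gp"
    and fin: "finite_dim sg (sum_set gm gp)"
    and V: "simple_supermodule sg br g0 {0} sv V0 V1 rho"
    and K: "induced_module sg br gm g0 gp sv V0 V1 rho sm M0 M1 act iota"
    and K': "induced_module sg br gp g0 gm sv V0 V1 rho sn N0 N1 act' iota'"
  shows "(\<forall>N. sub_supermodule UNIV sm M0 M1 act N \<and> N \<noteq> {0} \<longrightarrow>
             top_part sg gm sm act iota \<subseteq> N)
      \<and> socle UNIV sm M0 M1 act = generated_sub UNIV sm M0 M1 act (top_part sg gm sm act iota)
      \<and> simple_sub UNIV sm M0 M1 act (socle UNIV sm M0 M1 act)
      \<and> simple_sub UNIV sn N0 N1 act' (socle UNIV sn N0 N1 act')
      \<and> indecomposable UNIV sm M0 M1 act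
      \<and> indecomposable UNIV sn N0 N1 act'"
proof -
  have VG: "vector_space sg" and "module.subspace sg gm" "module.subspace sg g0" "module.subspace sg gp"
    and "\<forall>x\<in>gm. \<forall>y\<in>gm. br x y = 0" "\<forall>x\<in>gp. \<forall>y\<in>gp. br x y = 0"
    and "\<forall>x\<in>g0. \<forall>y\<in>gm. br x y \<in> gm" "\<forall>x\<in>g0. \<forall>y\<in>gp. br x y \<in> gp"
    using g by (simp_all add: graded_lie_superalgebra_def)
  then have K_top: "\<forall>N. sub_supermodule UNIV sm M0 M1 act N \<and> N \<noteq> {0} \<longrightarrow> top_part sg gm sm act iota \<subseteq> N"
      "\<exists>t \<in> top_part sg gm sm act iota. t \<noteq> 0"
    and K'_top: "\<forall>N. sub_supermodule UNIV sn N0 N1 act' N \<and> N \<noteq> {0} \<longrightarrow> top_part sg gp sn act' iota' \<subseteq> N"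
      "\<exists>t \<in> top_part sg gp sn act' iota'. t \<noteq> 0"
    using induced_module_top_part_in_every_sub[OF K V] induced_module_top_part_in_every_sub[OF K' V]
    by simp_all
  have SM: "supermodule sg br g0 (sum_set gm gp) sm M0 M1 act"
    and SM': "supermodule sg br g0 (sum_set gp gm) sn N0 N1 act'"
    using K K' by (simp_all add: induced_module_def)
  show ?thesis
    using K_top socle_eq_generated_sub_if_in_every_sub[OF SM K_top(2,1)]
      simple_sub_socle_if_in_every_sub[OF SM K_top(2,1)] simple_sub_socle_if_in_every_sub[OF SM' K'_top(2,1)]
      indecomposable_if_in_every_sub[OF K_top(2,1)] indecomposable_if_in_every_sub[OF K'_top(2,1)]
    by blast
qed

end
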